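(* Let $E=(\mathcal{X},\mathcal{Y},\mathcal{Z},f,g)$ be an information-lossless finite-state encoder with $s$ states, and let $K$ be its Kraft matrix. Then the spectral radius of $K$ satisfies $\rho(K)\le 1$. Consequently, for every positive integer $\ell$, the matrix $K^\ell$, whose $(z,z')$ entry equals $\sum_{\{x^\ell\in\mathcal{X}^\ell:\ g(z,x^\ell)=z'\}}2^{-L[f(z,x^\ell)]}$, also satisfies $\rho(K^\ell)\le 1$.
   Context: A finite-state (FS) encoder is a quintuple $E=(\mathcal{X},\mathcal{Y},\mathcal{Z},f,g)$, where $\mathcal{X}$ is a finite source alphabet of size $\alpha$, $\mathcal{Y}$ is a finite set of binary strings (possibly containing the empty string, of length $0$), $\mathcal{Z}$ is a finite set of $s$ states, $f:\mathcal{Z}\times\mathcal{X}\to\mathcal{Y}$ is the output function and $g:\mathcal{Z}\times\mathcal{X}\to\mathcal{Z}$ is the next-state function. For $z\in\mathcal{Z}$ and $x^n=(x_1,\dots,x_n)\in\mathcal{X}^n$, set $z_1=z$, $z_{i+1}=g(z_i,x_i)$; write $g(z,x^n)=z_{n+1}$ and let $f(z,x^n)$ denote the binary string obtained by concatenating $f(z_1,x_1),\dots,f(z_n,x_n)$; its length is $L[f(z,x^n)]=\sum_{i=1}^n L[f(z_i,x_i)]$, where $L(\cdot)$ denotes the length of a binary string. The encoder is information lossless (IL) if for every $z\in\mathcal{Z}$ and every $n\ge1$, the map $x^n\mapsto (f(z,x^n),g(z,x^n))$ is injective on $\mathcal{X}^n$ (i.e., the initial state, the output bit string and the final state determine the input).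 The Kraft matrix of $E$ is the $s\times s$ nonnegative matrix $K$ with entries $K_{zz'}=\sum_{\{x\in\mathcal{X}:\ g(z,x)=z'\}}2^{-L[f(z,x)]}$ (an empty sum is $0$). $\rho(\cdot)$ denotes spectral radius. *)

theory Defs
  imports "Jordan_Normal_Form.Spectral_Radius"
begin

definition fs_encoder :: "nat \<Rightarrow> (nat \<Rightarrow> 'x::finite \<Rightarrow> bool list) \<Rightarrow> (nat \<Rightarrow> 'x \<Rightarrow> nat) \<Rightarrow> bool" where
  "fs_encoder s f g \<longleftrightarrow> 0 < s \<and> (\<forall>z<s. \<forall>x. g z x < s)"

fun run_state :: "(nat \<Rightarrow> 'x \<Rightarrow> nat) \<Rightarrow> nat \<Rightarrow> 'x list \<Rightarrow> nat" where
  "run_state g z [] = z"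
| "run_state g z (x # xs) = run_state g (g z x) xs"

fun run_out :: "(nat \<Rightarrow> 'x \<Rightarrow> bool list) \<Rightarrow> (nat \<Rightarrow> 'x \<Rightarrow> nat) \<Rightarrow> nat \<Rightarrow> 'x list \<Rightarrow> bool list" where
  "run_out f g z [] = []"
| "run_out f g z (x # xs) = f z x @ run_out f g (g z x) xs"

definition info_lossless :: "nat \<Rightarrow> (nat \<Rightarrow> 'x::finite \<Rightarrow> bool list) \<Rightarrow> (nat \<Rightarrow> 'x \<Rightarrow> nat) \<Rightarrow> bool" where
  "info_lossless s f g \<longleftrightarrow>
     (\<forall>z<s. \<forall>n\<ge>1. inj_on (\<lambda>xs. (run_out f g z xs, run_state g z xs)) {xs. length xs = n})"

definition kraft_mat :: "nat \<Rightarrow> (nat \<Rightarrow> 'x::finite \<Rightarrow> bool list) \<Rightarrow> (nat \<Rightarrow> 'x \<Rightarrow> nat) \<Rightarrow> complex mat" where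
  "kraft_mat s f g = mat s s (\<lambda>(z, z'). complex_of_real
      (\<Sum>x\<in>{x. g z x = z'}. 2 powr (- real (length (f z x)))))"

end

theory Submission
  imports Defs
begin

text \<open>Information losslessness makes x^l \<mapsto> f(z, x^l) injective on these words, and
  the outputs have length at most l M, where M bounds the length of a single output; since the
  binary strings of each length have total weight 1, every entry of K^l is at most l M + 1.
  For an eigenvector v with eigenvalue \<lambda> this gives |\<lambda>|^l |v_i| = |(K^l v)_i| \<le> (l M + 1) |v|_1
  for all l, which forces |\<lambda>| \<le> 1. The powers of K^l are powers of K, so they grow linearly
  as well.\<close>

lemma finite_lists_length_eq_UNIV: "finite {xs :: 'a::finite list. length xs = n}"
  using finite_lists_length_eq[of "UNIV :: 'a set" n] by simp

lemma finite_lists_length_le_UNIV: "finite {xs :: 'a::finite list. length xs \<le> n}"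
  using finite_lists_length_le[of "UNIV :: 'a set" n] by simp

lemma sum_powr_length_bool_lists_eq:
  "(\<Sum>w \<in> {w :: bool list. length w = n}. 2 powr - real (length w)) = 1"
proof -
  have "(\<Sum>w \<in> {w :: bool list. length w = n}. 2 powr - real (length w))
      = 2 ^ n * 2 powr - real n"
    using card_lists_length_eq[of "UNIV :: bool set" n] by simp
  also have "\<dots> = 1"
    by (simp add: powr_minus powr_realpow)
  finally show ?thesis .
qed

lemma sum_powr_length_bool_lists_le:
  "(\<Sum>w \<in> {w :: bool list. length w \<le> N}. 2 powr - real (length w)) = real N + 1"
proof -
  have "(\<Sum>w \<in> {w :: bool list. length w \<le> N}. 2 powr - real (length w))
      = (\<Sum>n \<le> N. \<Sum>w \<in> {w \<in> {w :: bool list. length w \<le> N}. length w = n}. 2 powr - real (length w))"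
    by (rule sum.group[where g = length, symmetric]) (auto simp: finite_lists_length_le_UNIV)
  also have "\<dots> = (\<Sum>n \<le> N. \<Sum>w \<in> {w :: bool list. length w = n}. 2 powr - real (length w))"
    by (intro sum.cong) auto
  also have "\<dots> = real N + 1"
    unfolding sum_powr_length_bool_lists_eq by simp
  finally show ?thesis .
qed

lemma pow_mat_Suc_left:
  assumes A: "A \<in> carrier_mat n n"
  shows "A ^\<^sub>m Suc k = A * A ^\<^sub>m k"
proof -
  interpret semiring "ring_mat TYPE('a :: semiring_1) n ()"
    by (rule semiring_mat)
  show ?thesis
    unfolding pow_mat_ring_pow[OF A, where b = "()"]
    using nat_pow_Suc2[of A k] A by (simp add: ring_mat_def)
qed

lemma pow_mat_pow_mat:
  assumes A: "A \<in> carrier_mat n n"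
  shows "(A ^\<^sub>m k) ^\<^sub>m m = A ^\<^sub>m (k * m)"
proof -
  interpret semiring "ring_mat TYPE('a :: semiring_1) n ()"
    by (rule semiring_mat)
  have "(A ^\<^sub>m k) ^\<^sub>m m = (A ^\<^sub>m k) [^]\<^bsub>ring_mat TYPE('a) n ()\<^esub> m"
    using A by (simp add: pow_mat_ring_pow)
  also have "\<dots> = A ^\<^sub>m (k * m)"
    using nat_pow_pow[of A k m] A by (simp add: pow_mat_ring_pow[OF A, where b = "()"] ring_mat_def)
  finally show ?thesis .
qed

lemma le_1_if_power_le_linear:
  fixes r a b :: real
  assumes bound: "\<And>k. r ^ k \<le> a * real k + b"
  shows "r \<le> 1"
proof (rule ccontr)
  assume "\<not> r \<le> 1"
  then have r: "r > 1" by simp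
  have "(\<lambda>k. a * (real k / r ^ k) + b / r ^ k) \<longlonglongrightarrow> a * 0 + 0"
    using r by (intro tendsto_intros lim_n_over_pown LIMSEQ_divide_realpow_zero) auto
  then have "\<forall>\<^sub>F k in sequentially. a * (real k / r ^ k) + b / r ^ k < 1"
    by (intro order_tendstoD) auto
  then obtain k where "a * (real k / r ^ k) + b / r ^ k < 1"
    by (auto simp: eventually_sequentially)
  then have "a * real k + b < r ^ k"
    using r by (simp add: field_simps)
  with bound[of k] show False by simp
qed

lemma eigenvector_norm_power_le:
  fixes A :: "'a :: real_normed_field mat"
  assumes A: "A \<in> carrier_mat n n" and v: "eigenvector A v ev" and i: "i < n"
    and bound: "norm_bound (A ^\<^sub>m k) b"
  shows "norm ev ^ k * norm (v $ i) \<le> b * (\<Sum>j<n. norm (v $ j))"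
proof -
  have v_dim: "v \<in> carrier_vec n"
    using v A by (auto simp: eigenvector_def)
  have "norm ev ^ k * norm (v $ i) = norm ((A ^\<^sub>m k *\<^sub>v v) $ i)"
    using eigenvector_pow[OF A v, of k] i v_dim by (simp add: norm_mult norm_power)
  also have "\<dots> = norm (\<Sum>j<n. (A ^\<^sub>m k) $$ (i, j) * v $ j)"
    using A v_dim i by (simp add: scalar_prod_def lessThan_atLeast0)
  also have "\<dots> \<le> (\<Sum>j<n. norm ((A ^\<^sub>m k) $$ (i, j)) * norm (v $ j))"
    by (rule order_trans[OF norm_sum]) (simp add: norm_mult)
  also have "\<dots> \<le> (\<Sum>j<n. b * norm (v $ j))"
    using bound A i by (intro sum_mono mult_right_mono) (auto simp: norm_bound_def)
  finally show ?thesis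
    by (simp add: sum_distrib_left)
qed

lemma spectral_radius_le_1_if_linear_bound:
  assumes A: "A \<in> carrier_mat n n" and n: "n > 0"
    and bound: "\<And>k. norm_bound (A ^\<^sub>m k) (a * real k + b)"
  shows "spectral_radius A \<le> 1"
proof -
  obtain ev where ev: "eigenvalue A ev" and radius: "norm ev = spectral_radius A"
    using spectral_radius_mem_max(1)[OF A n] by (auto simp: spectrum_def)
  then obtain v where v: "eigenvector A v ev"
    by (auto simp: eigenvalue_def)
  then have "v \<in> carrier_vec n" "v \<noteq> 0\<^sub>v n"
    using A by (auto simp: eigenvector_def)
  then obtain i where i: "i < n" "v $ i \<noteq> 0"
    by (metis eq_vecI carrier_vecD index_zero_vec)
  define V where "V = (\<Sum>j<n. norm (v $ j)) / norm (v $ i)"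
  have "norm ev ^ k \<le> (a * V) * real k + b * V" for k
    using eigenvector_norm_power_le[OF A v i(1) bound, of k] i(2)
    by (simp add: V_def field_simps)
  then have "norm ev \<le> 1"
    by (rule le_1_if_power_le_linear)
  then show ?thesis
    using radius by simp
qed

lemma length_run_out_le:
  assumes enc: "fs_encoder s f g" and "z < s"
    and M: "\<And>z x. z < s \<Longrightarrow> length (f z x) \<le> M"
  shows "length (run_out f g z xs) \<le> length xs * M"
  using \<open>z < s\<close>
proof (induction xs arbitrary: z)
  case Nil
  then show ?case by simp
next
  case (Cons x xs)
  have "g z x < s"
    using enc Cons.prems by (auto simp: fs_encoder_def)
  then show ?case
    using Cons.IH M[OF Cons.prems, of x] by fastforce
qed

lemma output_length_bounded:
  fixes f :: "nat \<Rightarrow> 'x::finite \<Rightarrow> bool list"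
  obtains M where "\<And>z x. z < s \<Longrightarrow> length (f z x) \<le> M"
proof
  fix z x assume "z < s"
  then show "length (f z x) \<le> Max ((\<lambda>(z, x). length (f z x)) ` ({..<s} \<times> UNIV))"
    by (intro Max_ge) auto
qed

definition kraft_path_sum ::
    "(nat \<Rightarrow> 'x::finite \<Rightarrow> bool list) \<Rightarrow> (nat \<Rightarrow> 'x \<Rightarrow> nat) \<Rightarrow> nat \<Rightarrow> nat \<Rightarrow> nat \<Rightarrow> real"
  where "kraft_path_sum f g l z z' =
    (\<Sum>xs \<in> {xs. length xs = l \<and> run_state g z xs = z'}. 2 powr - real (length (run_out f g z xs)))"

lemma kraft_path_sum_nonneg: "kraft_path_sum f g l z z' \<ge> 0"
  unfolding kraft_path_sum_def by (simp add: sum_nonneg)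

lemma kraft_path_sum_0: "kraft_path_sum f g 0 z z' = (if z = z' then 1 else 0)"
proof -
  have "{xs. length xs = 0 \<and> run_state g z xs = z'} = (if z = z' then {[]} else {})"
    by auto
  then show ?thesis
    by (simp add: kraft_path_sum_def)
qed

lemma kraft_path_sum_Suc:
  "kraft_path_sum f g (Suc l) z z' =
    (\<Sum>x\<in>UNIV. 2 powr - real (length (f z x)) * kraft_path_sum f g l (g z x) z')"
proof -
  let ?weight = "\<lambda>xs. 2 powr - real (length (run_out f g z xs))"
  let ?paths = "\<lambda>x. {ys. length ys = l \<and> run_state g (g z x) ys = z'}"
  have paths_Suc: "{xs. length xs = Suc l \<and> run_state g z xs = z'}
      = (\<lambda>(x, ys). x # ys) ` (SIGMA x:UNIV. ?paths x)"
    by (auto simp: length_Suc_conv image_iff)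
  have "inj_on (\<lambda>(x, ys). x # ys) (SIGMA x:UNIV. ?paths x)"
    by (auto simp: inj_on_def)
  then have "kraft_path_sum f g (Suc l) z z' = (\<Sum>(x, ys) \<in> (SIGMA x:UNIV. ?paths x). ?weight (x # ys))"
    unfolding kraft_path_sum_def paths_Suc by (simp add: sum.reindex case_prod_unfold)
  also have "\<dots> = (\<Sum>x\<in>UNIV. \<Sum>ys \<in> ?paths x. ?weight (x # ys))"
    by (rule sum.Sigma[symmetric])
      (auto intro: finite_subset[OF _ finite_lists_length_eq_UNIV])
  also have "\<dots> = (\<Sum>x\<in>UNIV. 2 powr - real (length (f z x)) * kraft_path_sum f g l (g z x) z')"
    unfolding kraft_path_sum_def sum_distrib_left
    by (intro sum.cong refl) (simp add: powr_add[symmetric] algebra_simps)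
  finally show ?thesis .
qed

lemma kraft_mat_power_entry:
  assumes enc: "fs_encoder s f g" and "z < s" and "z' < s"
  shows "(kraft_mat s f g ^\<^sub>m l) $$ (z, z') = complex_of_real (kraft_path_sum f g l z z')"
  using \<open>z < s\<close>
proof (induction l arbitrary: z)
  case 0
  then show ?case
    using \<open>z' < s\<close> by (simp add: kraft_path_sum_0 kraft_mat_def)
next
  case (Suc l)
  let ?K = "kraft_mat s f g"
  let ?a = "\<lambda>x. 2 powr - real (length (f z x))"
  have K: "?K \<in> carrier_mat s s"
    by (simp add: kraft_mat_def)
  have g_less: "g z x \<in> {..<s}" for x
    using enc Suc.prems by (auto simp: fs_encoder_def)
  have "(?K ^\<^sub>m Suc l) $$ (z, z') = (\<Sum>w<s. ?K $$ (z, w) * (?K ^\<^sub>m l) $$ (w, z'))"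
    unfolding pow_mat_Suc_left[OF K]
    using K Suc.prems \<open>z' < s\<close> by (simp add: scalar_prod_def lessThan_atLeast0)
  also have "\<dots> = complex_of_real (\<Sum>w<s. \<Sum>x \<in> {x. g z x = w}. ?a x * kraft_path_sum f g l w z')"
    using Suc.prems Suc.IH by (simp add: kraft_mat_def sum_distrib_right)
  also have "(\<Sum>w<s. \<Sum>x \<in> {x. g z x = w}. ?a x * kraft_path_sum f g l w z')
      = (\<Sum>x\<in>UNIV. ?a x * kraft_path_sum f g l (g z x) z')"
    using sum.group[of UNIV "{..<s}" "g z" "\<lambda>x. ?a x * kraft_path_sum f g l (g z x) z'"] g_less
    by auto
  finally show ?case
    by (simp add: kraft_path_sum_Suc)
qed

lemma kraft_path_sum_le:
  assumes enc: "fs_encoder s f g" and lossless: "info_lossless s f g" and "z < s"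
    and M: "\<And>z x. z < s \<Longrightarrow> length (f z x) \<le> M"
  shows "kraft_path_sum f g l z z' \<le> real M * real l + 1"
proof -
  let ?paths = "{xs. length xs = l \<and> run_state g z xs = z'}"
  have "inj_on (run_out f g z) ?paths"
  proof (cases "l = 0")
    case False
    then have "inj_on (\<lambda>xs. (run_out f g z xs, run_state g z xs)) {xs. length xs = l}"
      using lossless \<open>z < s\<close> by (simp add: info_lossless_def)
    then show ?thesis
      by (auto simp: inj_on_def)
  qed (auto simp: inj_on_def)
  then have "kraft_path_sum f g l z z' = (\<Sum>w \<in> run_out f g z ` ?paths. 2 powr - real (length w))"
    unfolding kraft_path_sum_def by (simp add: sum.reindex)
  also have "\<dots> \<le> (\<Sum>w \<in> {w :: bool list. length w \<le> l * M}. 2 powr - real (length w))"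
    using length_run_out_le[OF enc \<open>z < s\<close> M]
    by (intro sum_mono2 finite_lists_length_le_UNIV) auto
  also have "\<dots> = real M * real l + 1"
    by (simp add: sum_powr_length_bool_lists_le)
  finally show ?thesis .
qed

lemma kraft_mat_power_norm_bound:
  assumes enc: "fs_encoder s f g" and lossless: "info_lossless s f g"
    and M: "\<And>z x. z < s \<Longrightarrow> length (f z x) \<le> M"
  shows "norm_bound (kraft_mat s f g ^\<^sub>m l) (real M * real l + 1)"
proof (rule norm_boundI)
  fix z z'
  assume "z < dim_row (kraft_mat s f g ^\<^sub>m l)" "z' < dim_col (kraft_mat s f g ^\<^sub>m l)"
  then have "z < s" "z' < s"
    by (auto simp: kraft_mat_def split: if_splits)
  then show "norm ((kraft_mat s f g ^\<^sub>m l) $$ (z, z')) \<le> real M * real l + 1"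
    using kraft_mat_power_entry[OF enc] kraft_path_sum_le[OF enc lossless _ M]
      kraft_path_sum_nonneg[of f g l z z']
    by simp
qed

theorem theorem1:
  fixes s :: nat and f :: "nat \<Rightarrow> 'x::finite \<Rightarrow> bool list" and g :: "nat \<Rightarrow> 'x \<Rightarrow> nat"
  assumes "fs_encoder s f g" and "info_lossless s f g"
  shows "spectral_radius (kraft_mat s f g) \<le> 1 \<and>
    (\<forall>l::nat. l \<ge> 1 \<longrightarrow>
       (\<forall>z<s. \<forall>z'<s. (kraft_mat s f g ^\<^sub>m l) $$ (z, z') =
          complex_of_real (\<Sum>xs\<in>{xs. length xs = l \<and> run_state g z xs = z'}.
              2 powr (- real (length (run_out f g z xs)))))
       \<and> spectral_radius (kraft_mat s f g ^\<^sub>m l) \<le> 1)"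
proof -
  let ?K = "kraft_mat s f g"
  have K: "?K \<in> carrier_mat s s"
    by (simp add: kraft_mat_def)
  have "s > 0"
    using assms(1) by (simp add: fs_encoder_def)
  obtain M where M: "\<And>z x. z < s \<Longrightarrow> length (f z x) \<le> M"
    using output_length_bounded by blast
  note bound = kraft_mat_power_norm_bound[OF assms M]
  have "spectral_radius ?K \<le> 1"
    using spectral_radius_le_1_if_linear_bound[OF K \<open>s > 0\<close> bound] .
  moreover have "spectral_radius (?K ^\<^sub>m l) \<le> 1" for l
    using bound[of "l * _"]
    by (intro spectral_radius_le_1_if_linear_bound[OF pow_carrier_mat[OF K] \<open>s > 0\<close>,
          where a = "real M * real l" and b = 1])
      (simp add: pow_mat_pow_mat[OF K] mult.assoc)
  ultimately show ?thesis
    using kraft_mat_power_entry[OF assms(1)] unfolding kraft_path_sum_def by blast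
qed

end
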